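(* Let $M,N$ be smooth manifolds and let $\{f_s:M\to N\}_{s\in[0,1]}$ be a (smooth) homotopy through submersions. Suppose there is a compact set $K\subset M$ such that $f_s=f_0$ on $M\setminus K$ for all $s$. Then there exists $\varepsilon>0$ such that $f_s(M)=f_0(M)$ for all $s\in[0,\varepsilon]$. *)

theory Defs
  imports "HOL-Analysis.Analysis"
begin

fun iter_dderiv :: "'a::real_normed_vector list \<Rightarrow> ('a \<Rightarrow> 'b::real_normed_vector) \<Rightarrow> 'a \<Rightarrow> 'b" where
  "iter_dderiv [] g = g"
| "iter_dderiv (v # vs) g = (\<lambda>x. frechet_derivative (iter_dderiv vs g) (at x) v)"

definition smooth_on :: "'a::euclidean_space set \<Rightarrow> ('a \<Rightarrow> 'b::real_normed_vector) \<Rightarrow> bool" where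
  "smooth_on S g \<longleftrightarrow> (\<forall>vs. iter_dderiv vs g differentiable_on S)"

definition is_chart :: "'a topology \<Rightarrow> 'a set \<Rightarrow> ('a \<Rightarrow> 'e::euclidean_space) \<Rightarrow> bool" where
  "is_chart T U \<phi> \<longleftrightarrow> openin T U \<and> open (\<phi> ` U) \<and>
     homeomorphic_map (subtopology T U) (top_of_set (\<phi> ` U)) \<phi>"

definition smooth_manifold :: "'a topology \<Rightarrow> ('a set \<times> ('a \<Rightarrow> 'e::euclidean_space)) set \<Rightarrow> bool" where
  "smooth_manifold T A \<longleftrightarrow>
     Hausdorff_space T \<and> second_countable T \<and>
     (\<forall>(U, \<phi>) \<in> A. is_chart T U \<phi>) \<and>
     (\<forall>x \<in> topspace T. \<exists>(U, \<phi>) \<in> A. x \<in> U) \<and>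
     (\<forall>(U, \<phi>) \<in> A. \<forall>(V, \<psi>) \<in> A. smooth_on (\<phi> ` (U \<inter> V)) (\<psi> \<circ> inv_into U \<phi>))"

definition smooth_map ::
  "'a topology \<Rightarrow> ('a set \<times> ('a \<Rightarrow> 'e::euclidean_space)) set \<Rightarrow>
   'b topology \<Rightarrow> ('b set \<times> ('b \<Rightarrow> 'f::euclidean_space)) set \<Rightarrow> ('a \<Rightarrow> 'b) \<Rightarrow> bool" where
  "smooth_map T A T' B g \<longleftrightarrow> continuous_map T T' g \<and>
     (\<forall>(U, \<phi>) \<in> A. \<forall>(V, \<psi>) \<in> B.
        smooth_on (\<phi> ` (U \<inter> g -` V)) (\<psi> \<circ> g \<circ> inv_into U \<phi>))"

definition submersion ::
  "'a topology \<Rightarrow> ('a set \<times> ('a \<Rightarrow> 'e::euclidean_space)) set \<Rightarrow>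
   'b topology \<Rightarrow> ('b set \<times> ('b \<Rightarrow> 'f::euclidean_space)) set \<Rightarrow> ('a \<Rightarrow> 'b) \<Rightarrow> bool" where
  "submersion T A T' B g \<longleftrightarrow> smooth_map T A T' B g \<and>
     (\<forall>x \<in> topspace T. \<forall>(U, \<phi>) \<in> A. \<forall>(V, \<psi>) \<in> B. x \<in> U \<longrightarrow> g x \<in> V \<longrightarrow>
        (\<exists>D. ((\<psi> \<circ> g \<circ> inv_into U \<phi>) has_derivative D) (at (\<phi> x)) \<and> surj D))"

text \<open>Smooth homotopy [0,1] \<times> M \<rightarrow> N, (s,x) \<mapsto> f s x: continuous, and in
  charts locally the restriction of a smooth map defined on an open subset of
  \<real> \<times> \<real>^m (the usual notion of smoothness on a manifold with boundary).\<close>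
definition smooth_homotopy ::
  "'a topology \<Rightarrow> ('a set \<times> ('a \<Rightarrow> 'e::euclidean_space)) set \<Rightarrow>
   'b topology \<Rightarrow> ('b set \<times> ('b \<Rightarrow> 'f::euclidean_space)) set \<Rightarrow> (real \<Rightarrow> 'a \<Rightarrow> 'b) \<Rightarrow> bool" where
  "smooth_homotopy T A T' B f \<longleftrightarrow>
     continuous_map (prod_topology (top_of_set {0..1}) T) T' (\<lambda>(s, x). f s x) \<and>
     (\<forall>(U, \<phi>) \<in> A. \<forall>(V, \<psi>) \<in> B. \<forall>s x. s \<in> {0..1} \<and> x \<in> U \<and> f s x \<in> V \<longrightarrow>
        (\<exists>W H. open W \<and> (s, \<phi> x) \<in> W \<and> smooth_on W (H :: real \<times> 'e \<Rightarrow> 'f) \<and>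
           (\<forall>(t, y) \<in> W. t \<in> {0..1} \<and> y \<in> \<phi> ` U \<and> f t (inv_into U \<phi> y) \<in> V \<longrightarrow>
              H (t, y) = \<psi> (f t (inv_into U \<phi> y)))))"

end

theory Submission
  imports Defs
begin

(*
  Write the homotopy near (0, x) in charts as H (t, y). Since f 0 is a submersion, the
  time-graph map (t, y) |-> (t, H (t, y)) has a surjective derivative at (0, y), so by
  the open mapping theorem for such maps its image contains a product S0 x Z. Hence one
  neighbourhood of f 0 x lies in f s ` M for all small s >= 0; in particular f 0 ` M is open,
  and by continuity f s maps a neighbourhood of x into f 0 ` M for small s. Compactness of K
  makes the smallness uniform on K, and off K nothing moves.
*)

lemma continuous_map_inv_into_homeomorphic_map:
  assumes "homeomorphic_map X Y f"
  shows "continuous_map Y X (inv_into (topspace X) f)"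
proof -
  have "open_map X Y f" "f ` topspace X = topspace Y" "inj_on f (topspace X)"
    using assms by (auto simp: homeomorphic_eq_everything_map)
  then show ?thesis
    by (subst open_eq_continuous_inverse_map[symmetric]) (auto simp: f_inv_into_f inv_into_into)
qed

lemma smooth_on_imp_differentiable_on: "smooth_on S g \<Longrightarrow> g differentiable_on S"
  unfolding smooth_on_def by (metis iter_dderiv.simps(1))

lemma smooth_on_subset: "smooth_on S g \<Longrightarrow> S' \<subseteq> S \<Longrightarrow> smooth_on S' g"
  unfolding smooth_on_def by (meson differentiable_on_subset)

lemma compactin_eventually_uniform:
  assumes "compactin X K"
    and "\<And>x. x \<in> K \<Longrightarrow> \<exists>N. openin X N \<and> x \<in> N \<and> (\<forall>\<^sub>F s in F. \<forall>y\<in>N. Q s y)"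
  shows "\<forall>\<^sub>F s in F. \<forall>y\<in>K. Q s y"
proof -
  obtain N where N: "\<And>x. x \<in> K \<Longrightarrow> openin X (N x) \<and> x \<in> N x \<and> (\<forall>\<^sub>F s in F. \<forall>y\<in>N x. Q s y)"
    using assms(2) by metis
  have "\<exists>C. finite C \<and> C \<subseteq> N ` K \<and> K \<subseteq> \<Union> C"
    using N by (intro compactinD[OF assms(1)]) blast+
  then obtain K' where K': "finite K'" "K' \<subseteq> K" "K \<subseteq> (\<Union>x\<in>K'. N x)"
    by (metis finite_subset_image)
  then have "\<forall>\<^sub>F s in F. \<forall>x\<in>K'. \<forall>y\<in>N x. Q s y"
    using N by (intro eventually_ball_finite) auto
  then show ?thesis
    by (rule eventually_mono) (use K' in blast)
qed

lemma continuous_map_eventually_tube: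
  assumes g: "continuous_map (prod_topology (top_of_set S) X) Y (\<lambda>(s, x). g s x)"
    and "openin Y Z" "a \<in> S" "x \<in> topspace X" "g a x \<in> Z"
  obtains N where "openin X N" "x \<in> N" "\<forall>\<^sub>F s in nhds a. s \<in> S \<longrightarrow> (\<forall>y\<in>N. g s y \<in> Z)"
proof -
  define P where "P = {p \<in> topspace (prod_topology (top_of_set S) X). (\<lambda>(s, x). g s x) p \<in> Z}"
  have P: "openin (prod_topology (top_of_set S) X) P"
    unfolding P_def using g \<open>openin Y Z\<close> by (rule openin_continuous_map_preimage)
  have "(a, x) \<in> P"
    using assms(3-5) by (simp add: P_def)
  from P[unfolded openin_prod_topology_alt, rule_format, OF this]
  obtain S' N where S'N: "openin (top_of_set S) S'" "openin X N" "a \<in> S'" "x \<in> N"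
    "S' \<times> N \<subseteq> P"
    by blast
  then obtain E where "open E" "S' = S \<inter> E"
    unfolding openin_open by blast
  then have "\<forall>\<^sub>F s in nhds a. s \<in> S \<longrightarrow> s \<in> S'"
    using \<open>a \<in> S'\<close> by (auto simp: eventually_nhds)
  moreover have "g s y \<in> Z" if "s \<in> S'" "y \<in> N" for s y
    using S'N(5) that by (auto simp: P_def)
  ultimately have "\<forall>\<^sub>F s in nhds a. s \<in> S \<longrightarrow> (\<forall>y\<in>N. g s y \<in> Z)"
    by (auto elim: eventually_mono)
  with S'N(2,4) that show ?thesis
    by blast
qed

lemma surj_derivative_imp_interior_image:
  fixes f :: "'a::euclidean_space \<Rightarrow> 'b::euclidean_space"
  assumes "open S" "continuous_on S f" "x \<in> S" "(f has_derivative f') (at x)" "surj f'"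
  shows "f x \<in> interior (f ` S)"
proof -
  have "linear f'"
    using assms(4) by (rule has_derivative_linear)
  then obtain g where "linear g" "f' \<circ> g = id"
    using real_vector.linear_surjective_right_inverse[OF _ assms(5)] by blast
  moreover have "x \<in> interior S"
    using assms(1,3) by (simp add: interior_open)
  ultimately show ?thesis
    using sussmann_open_mapping[OF assms(1-4) _ _ order_refl] linear_conv_bounded_linear by blast
qed

lemma surj_time_graph_linear:
  fixes L :: "real \<times> 'a::real_vector \<Rightarrow> 'b::real_vector"
  assumes "linear L" "surj (\<lambda>v. L (0, v))"
  shows "surj (\<lambda>d. (fst d, L d))"
  unfolding surj_def
proof
  fix p :: "real \<times> 'b"
  from surjD[OF assms(2), of "snd p - L (fst p, 0)"]
  obtain v where v: "L (0, v) = snd p - L (fst p, 0)"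
    by metis
  have "L (fst p, v) = L (fst p, 0) + L (0, v)"
    using linear_add[OF assms(1), of "(fst p, 0)" "(0, v)"] by simp
  also have "\<dots> = snd p"
    using v by simp
  finally show "\<exists>d. p = (fst d, L d)"
    by (intro exI[of _ "(fst p, v)"]) simp
qed

lemma time_graph_interior_image:
  fixes H :: "real \<times> 'a::euclidean_space \<Rightarrow> 'b::euclidean_space"
  assumes "open W" "p \<in> W" "continuous_on W H" "(H has_derivative DH) (at p)"
    and "surj (\<lambda>v. DH (0, v))"
  shows "(fst p, H p) \<in> interior ((\<lambda>q. (fst q, H q)) ` W)"
proof -
  have "((\<lambda>q. (fst q, H q)) has_derivative (\<lambda>d. (fst d, DH d))) (at p)"
    using assms(4) by (intro has_derivative_Pair has_derivative_fst has_derivative_ident)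
  moreover have "surj (\<lambda>d. (fst d, DH d))"
    using assms(4,5) by (intro surj_time_graph_linear has_derivative_linear)
  moreover have "continuous_on W (\<lambda>q. (fst q, H q))"
    using assms(3) by (intro continuous_intros)
  ultimately show ?thesis
    using surj_derivative_imp_interior_image[OF assms(1) _ assms(2)] by simp
qed

lemma family_locally_onto:
  fixes H :: "real \<times> 'a::euclidean_space \<Rightarrow> 'b::euclidean_space"
  assumes "open W" "(t0, y0) \<in> W" "continuous_on W H" "(H has_derivative DH) (at (t0, y0))"
    and "surj (\<lambda>v. DH (0, v))"
  obtains S0 Z where "open S0" "open Z" "t0 \<in> S0" "H (t0, y0) \<in> Z"
    "\<And>s z. s \<in> S0 \<Longrightarrow> z \<in> Z \<Longrightarrow> \<exists>y. (s, y) \<in> W \<and> H (s, y) = z"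
proof -
  have "(t0, H (t0, y0)) \<in> interior ((\<lambda>q. (fst q, H q)) ` W)"
    using time_graph_interior_image[OF assms] by simp
  then obtain S0 Z where "open S0" "open Z" "(t0, H (t0, y0)) \<in> S0 \<times> Z"
    and "S0 \<times> Z \<subseteq> interior ((\<lambda>q. (fst q, H q)) ` W)"
    by (rule open_prod_elim[OF open_interior])
  then have "S0 \<times> Z \<subseteq> (\<lambda>q. (fst q, H q)) ` W"
    using interior_subset by blast
  then have "\<exists>y. (s, y) \<in> W \<and> H (s, y) = z" if "s \<in> S0" "z \<in> Z" for s z
    using that by force
  with \<open>open S0\<close> \<open>open Z\<close> \<open>(t0, H (t0, y0)) \<in> S0 \<times> Z\<close> that show ?thesis
    by blast
qed

lemma surj_vertical_derivative:
  assumes "open W" "(s0, y0) \<in> W" "(H has_derivative DH) (at (s0, y0))"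
    and "(g has_derivative D) (at y0)" "surj D" "\<And>y. (s0, y) \<in> W \<Longrightarrow> H (s0, y) = g y"
  shows "surj (\<lambda>v. DH (0, v))"
proof -
  have "((\<lambda>y. (s0, y)) has_derivative (\<lambda>v. (0, v))) (at y0)"
    by (auto intro!: derivative_eq_intros)
  from has_derivative_compose[OF this assms(3)]
  have slice: "((\<lambda>y. H (s0, y)) has_derivative (\<lambda>v. DH (0, v))) (at y0)" .
  have "open ((\<lambda>y. (s0, y)) -` W)"
    using assms(1) by (intro continuous_open_vimage continuous_intros)
  then have "(g has_derivative (\<lambda>v. DH (0, v))) (at y0)"
    using assms(2,6) by (intro has_derivative_transform_within_open[OF slice]) auto
  then show ?thesis
    using assms(4,5) has_derivative_unique by metis
qed

lemma inj_on_chart: "is_chart T U \<phi> \<Longrightarrow> inj_on \<phi> U"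
  unfolding is_chart_def homeomorphic_eq_everything_map
  by (metis openin_subset topspace_subtopology_subset)

lemma continuous_map_chart_inverse:
  assumes "is_chart T U \<phi>"
  shows "continuous_map (top_of_set (\<phi> ` U)) T (inv_into U \<phi>)"
proof -
  have "topspace (subtopology T U) = U"
    using assms openin_subset by (auto simp: is_chart_def)
  then show ?thesis
    using assms continuous_map_inv_into_homeomorphic_map[of "subtopology T U"]
    by (metis continuous_map_into_fulltopology is_chart_def)
qed

lemma openin_chart_preimage:
  assumes "is_chart T U \<phi>" "open Z"
  shows "openin T {x \<in> U. \<phi> x \<in> Z}"
proof -
  have U: "openin T U" and hom: "homeomorphic_map (subtopology T U) (top_of_set (\<phi> ` U)) \<phi>"
    using assms(1) by (simp_all add: is_chart_def)
  have "continuous_map (subtopology T U) euclidean \<phi>"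
    using homeomorphic_imp_continuous_map[OF hom] by (rule continuous_map_into_fulltopology)
  moreover have "openin euclidean Z"
    using assms(2) by simp
  ultimately have "openin (subtopology T U) {x \<in> topspace (subtopology T U). \<phi> x \<in> Z}"
    by (rule openin_continuous_map_preimage)
  then have "openin (subtopology T U) {x \<in> U. \<phi> x \<in> Z}"
    by (simp only: topspace_subtopology_subset[OF openin_subset[OF U]])
  then show ?thesis
    using U by (rule openin_trans_full)
qed

lemma continuous_map_homotopy_in_chart:
  assumes "continuous_map (prod_topology (top_of_set S) T) T' (\<lambda>(s, x). f s x)"
    and "is_chart T U \<phi>"
  shows "continuous_map (top_of_set (S \<times> \<phi> ` U)) T' (\<lambda>(t, y). f t (inv_into U \<phi> y))"
proof -
  have "continuous_map (top_of_set (S \<times> \<phi> ` U)) (top_of_set S) fst"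
    and snd: "continuous_map (top_of_set (S \<times> \<phi> ` U)) (top_of_set (\<phi> ` U)) snd"
    by (auto simp: continuous_map_iff_continuous intro: continuous_intros)
  moreover have "continuous_map (top_of_set (S \<times> \<phi> ` U)) T (inv_into U \<phi> \<circ> snd)"
    using continuous_map_compose[OF snd continuous_map_chart_inverse[OF assms(2)]] .
  ultimately have "continuous_map (top_of_set (S \<times> \<phi> ` U)) (prod_topology (top_of_set S) T)
      (\<lambda>(t, y). (t, inv_into U \<phi> y))"
    by (simp add: continuous_map_pairwise o_def case_prod_beta)
  from continuous_map_compose[OF this assms(1)] show ?thesis
    by (simp add: o_def split_def)
qed

lemma smooth_homotopyD:
  fixes A :: "('a set \<times> ('a \<Rightarrow> 'm::euclidean_space)) set"
    and B :: "('b set \<times> ('b \<Rightarrow> 'n::euclidean_space)) set"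
  assumes "smooth_homotopy T A T' B f" "(U, \<phi>) \<in> A" "(V, \<psi>) \<in> B" "s \<in> {0..1}" "x \<in> U" "f s x \<in> V"
  obtains W and H :: "real \<times> 'm \<Rightarrow> 'n" where "open W" "(s, \<phi> x) \<in> W" "smooth_on W H"
    "\<And>t y. (t, y) \<in> W \<Longrightarrow> t \<in> {0..1} \<Longrightarrow> y \<in> \<phi> ` U \<Longrightarrow> f t (inv_into U \<phi> y) \<in> V \<Longrightarrow>
       H (t, y) = \<psi> (f t (inv_into U \<phi> y))"
proof -
  have "\<forall>(U, \<phi>) \<in> A. \<forall>(V, \<psi>) \<in> B. \<forall>s x. s \<in> {0..1} \<and> x \<in> U \<and> f s x \<in> V \<longrightarrow>
      (\<exists>W H. open W \<and> (s, \<phi> x) \<in> W \<and> smooth_on W (H :: real \<times> 'm \<Rightarrow> 'n) \<and>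
         (\<forall>(t, y) \<in> W. t \<in> {0..1} \<and> y \<in> \<phi> ` U \<and> f t (inv_into U \<phi> y) \<in> V \<longrightarrow>
            H (t, y) = \<psi> (f t (inv_into U \<phi> y))))"
    using assms(1) unfolding smooth_homotopy_def by (rule conjunct2)
  then have "\<exists>W H. open W \<and> (s, \<phi> x) \<in> W \<and> smooth_on W (H :: real \<times> 'm \<Rightarrow> 'n) \<and>
      (\<forall>(t, y) \<in> W. t \<in> {0..1} \<and> y \<in> \<phi> ` U \<and> f t (inv_into U \<phi> y) \<in> V \<longrightarrow>
         H (t, y) = \<psi> (f t (inv_into U \<phi> y)))"
    using assms(2-6) by fastforce
  with that show ?thesis
    by blast
qed

lemma smooth_homotopy_local_representative:
  fixes f :: "real \<Rightarrow> 'a \<Rightarrow> 'b" and A :: "('a set \<times> ('a \<Rightarrow> 'm::euclidean_space)) set"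
    and B :: "('b set \<times> ('b \<Rightarrow> 'n::euclidean_space)) set"
  assumes hom: "smooth_homotopy T A T' B f"
    and U: "(U, \<phi>) \<in> A" "is_chart T U \<phi>" and V: "(V, \<psi>) \<in> B" "is_chart T' V \<psi>"
    and "s0 \<in> {0..1}" "x0 \<in> U" "f s0 x0 \<in> V"
  obtains W and H :: "real \<times> 'm \<Rightarrow> 'n"
  where "open W" "(s0, \<phi> x0) \<in> W" "smooth_on W H"
    "\<And>t y. (t, y) \<in> W \<Longrightarrow> t \<in> {0..1} \<Longrightarrow>
       y \<in> \<phi> ` U \<and> f t (inv_into U \<phi> y) \<in> V \<and> H (t, y) = \<psi> (f t (inv_into U \<phi> y))"
proof -
  obtain W0 and H :: "real \<times> 'm \<Rightarrow> 'n" where W0: "open W0" "(s0, \<phi> x0) \<in> W0" "smooth_on W0 H"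
    and agree: "\<And>t y. (t, y) \<in> W0 \<Longrightarrow> t \<in> {0..1} \<Longrightarrow> y \<in> \<phi> ` U \<Longrightarrow> f t (inv_into U \<phi> y) \<in> V \<Longrightarrow>
       H (t, y) = \<psi> (f t (inv_into U \<phi> y))"
    using smooth_homotopyD[OF hom U(1) V(1) assms(6-8)] by blast
  define F where "F = (\<lambda>(t, y). f t (inv_into U \<phi> y))"
  have "continuous_map (prod_topology (top_of_set {0..1}) T) T' (\<lambda>(s, x). f s x)"
    using hom unfolding smooth_homotopy_def by (rule conjunct1)
  then have "continuous_map (top_of_set ({0..1} \<times> \<phi> ` U)) T' F"
    unfolding F_def using U(2) by (rule continuous_map_homotopy_in_chart)
  moreover have "openin T' V"
    using V(2) by (simp add: is_chart_def)
  ultimately have "openin (top_of_set ({0..1} \<times> \<phi> ` U))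
      {p \<in> topspace (top_of_set ({0..1} \<times> \<phi> ` U)). F p \<in> V}"
    by (rule openin_continuous_map_preimage)
  then obtain E where "open E" and E: "{p \<in> {0..1} \<times> \<phi> ` U. F p \<in> V} = ({0..1} \<times> \<phi> ` U) \<inter> E"
    unfolding openin_open topspace_euclidean_subtopology by blast
  have inv: "inv_into U \<phi> (\<phi> x0) = x0"
    using inj_on_chart[OF U(2)] assms(7) by simp
  show ?thesis
  proof
    show "open (W0 \<inter> E \<inter> UNIV \<times> \<phi> ` U)"
      using W0(1) \<open>open E\<close> U(2) by (intro open_Int open_Times) (simp_all add: is_chart_def)
    have "(s0, \<phi> x0) \<in> {p \<in> {0..1} \<times> \<phi> ` U. F p \<in> V}"
      using assms(6-8) inv by (simp add: F_def)
    then show "(s0, \<phi> x0) \<in> W0 \<inter> E \<inter> UNIV \<times> \<phi> ` U"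
      using W0(2) E by blast
    show "smooth_on (W0 \<inter> E \<inter> UNIV \<times> \<phi> ` U) H"
      using W0(3) by (rule smooth_on_subset) blast
  next
    fix t y assume ty: "(t, y) \<in> W0 \<inter> E \<inter> UNIV \<times> \<phi> ` U" "t \<in> {0..1}"
    then have "(t, y) \<in> {p \<in> {0..1} \<times> \<phi> ` U. F p \<in> V}"
      using E by blast
    then have "y \<in> \<phi> ` U" "f t (inv_into U \<phi> y) \<in> V"
      by (simp_all add: F_def)
    with ty agree show "y \<in> \<phi> ` U \<and> f t (inv_into U \<phi> y) \<in> V \<and> H (t, y) = \<psi> (f t (inv_into U \<phi> y))"
      by simp
  qed
qed

lemma smooth_homotopy_locally_onto_in_charts:
  assumes "smooth_homotopy T A T' B f" "submersion T A T' B (f 0)"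
    and U: "(U, \<phi>) \<in> A" "is_chart T U \<phi>" "x0 \<in> U"
    and V: "(V, \<psi>) \<in> B" "is_chart T' V \<psi>" "f 0 x0 \<in> V"
  obtains S0 Z where "open S0" "open Z" "0 \<in> S0" "\<psi> (f 0 x0) \<in> Z"
    "\<And>s z. s \<in> S0 \<Longrightarrow> s \<in> {0..1} \<Longrightarrow> z \<in> Z \<Longrightarrow>
       \<exists>y\<in>\<phi> ` U. f s (inv_into U \<phi> y) \<in> V \<and> \<psi> (f s (inv_into U \<phi> y)) = z"
proof -
  obtain W H where W: "open W" "(0, \<phi> x0) \<in> W" "smooth_on W H"
    and rep: "\<And>t y. (t, y) \<in> W \<Longrightarrow> t \<in> {0..1} \<Longrightarrow>
       y \<in> \<phi> ` U \<and> f t (inv_into U \<phi> y) \<in> V \<and> H (t, y) = \<psi> (f t (inv_into U \<phi> y))"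
    using smooth_homotopy_local_representative[OF assms(1) U(1,2) V(1,2) _ U(3) V(3)] by auto
  have "H differentiable_on W"
    using W(3) by (rule smooth_on_imp_differentiable_on)
  then obtain DH where DH: "(H has_derivative DH) (at (0, \<phi> x0))" and "continuous_on W H"
    using W(1,2) differentiable_imp_continuous_on
    by (metis at_within_open differentiable_def differentiable_on_def)
  have "x0 \<in> topspace T"
    using U(2,3) openin_subset by (force simp: is_chart_def)
  then obtain D where D: "((\<psi> \<circ> f 0 \<circ> inv_into U \<phi>) has_derivative D) (at (\<phi> x0))" "surj D"
    using assms(2) U V unfolding submersion_def by blast
  have "surj (\<lambda>v. DH (0, v))"
    using surj_vertical_derivative[OF W(1,2) DH D] rep by simp
  then obtain S0 Z where S0Z: "open S0" "open Z" "0 \<in> S0" "H (0, \<phi> x0) \<in> Z"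
    and onto: "\<And>s z. s \<in> S0 \<Longrightarrow> z \<in> Z \<Longrightarrow> \<exists>y. (s, y) \<in> W \<and> H (s, y) = z"
    using family_locally_onto[OF W(1,2) \<open>continuous_on W H\<close> DH] by blast
  have "H (0, \<phi> x0) = \<psi> (f 0 x0)"
    using rep[OF W(2)] inj_on_chart[OF U(2)] U(3) by simp
  moreover have "\<exists>y\<in>\<phi> ` U. f s (inv_into U \<phi> y) \<in> V \<and> \<psi> (f s (inv_into U \<phi> y)) = z"
    if "s \<in> S0" "s \<in> {0..1}" "z \<in> Z" for s z
    using onto[OF that(1,3)] rep that(2) by metis
  ultimately show ?thesis
    using that S0Z by simp
qed

lemma homotopy_covers_neighbourhood:
  assumes "smooth_manifold T A" "smooth_manifold T' B" "smooth_homotopy T A T' B f"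
    and "submersion T A T' B (f 0)" "x0 \<in> topspace T"
  obtains Y where "openin T' Y" "f 0 x0 \<in> Y" "\<forall>\<^sub>F s in nhds 0. 0 \<le> s \<longrightarrow> Y \<subseteq> f s ` topspace T"
proof -
  obtain U \<phi> where U: "(U, \<phi>) \<in> A" "is_chart T U \<phi>" "x0 \<in> U"
    using assms(1,5) unfolding smooth_manifold_def by blast
  have "f 0 x0 \<in> topspace T'"
    using assms(4,5) by (auto simp: submersion_def smooth_map_def continuous_map_def)
  then obtain V \<psi> where V: "(V, \<psi>) \<in> B" "is_chart T' V \<psi>" "f 0 x0 \<in> V"
    using assms(2) unfolding smooth_manifold_def by blast
  obtain S0 Z where "open S0" "open Z" "0 \<in> S0" "\<psi> (f 0 x0) \<in> Z"
    and onto: "\<And>s z. s \<in> S0 \<Longrightarrow> s \<in> {0..1} \<Longrightarrow> z \<in> Z \<Longrightarrow>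
       \<exists>y\<in>\<phi> ` U. f s (inv_into U \<phi> y) \<in> V \<and> \<psi> (f s (inv_into U \<phi> y)) = z"
    using smooth_homotopy_locally_onto_in_charts[OF assms(3,4) U V] by blast
  have cover: "{p \<in> V. \<psi> p \<in> Z} \<subseteq> f s ` topspace T" if s: "s \<in> S0" "0 \<le> s" "s < 1" for s
  proof
    fix p assume p: "p \<in> {p \<in> V. \<psi> p \<in> Z}"
    then obtain y where y: "y \<in> \<phi> ` U" "f s (inv_into U \<phi> y) \<in> V" "\<psi> (f s (inv_into U \<phi> y)) = \<psi> p"
      using onto[of s "\<psi> p"] s by auto
    then have "p = f s (inv_into U \<phi> y)"
      using p inj_onD[OF inj_on_chart[OF V(2)]] by force
    moreover have "inv_into U \<phi> y \<in> topspace T"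
      using inv_into_into[OF y(1)] openin_subset U(2) by (force simp: is_chart_def)
    ultimately show "p \<in> f s ` topspace T"
      by blast
  qed
  have "\<forall>\<^sub>F s in nhds 0. s \<in> S0 \<inter> {..<1}"
    using \<open>open S0\<close> \<open>0 \<in> S0\<close> by (intro eventually_nhds_in_open) auto
  then have "\<forall>\<^sub>F s in nhds 0. 0 \<le> s \<longrightarrow> {p \<in> V. \<psi> p \<in> Z} \<subseteq> f s ` topspace T"
    by (rule eventually_mono) (use cover in auto)
  moreover have "openin T' {p \<in> V. \<psi> p \<in> Z}"
    using V(2) \<open>open Z\<close> by (rule openin_chart_preimage)
  moreover have "f 0 x0 \<in> {p \<in> V. \<psi> p \<in> Z}"
    using V(3) \<open>\<psi> (f 0 x0) \<in> Z\<close> by simp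
  ultimately show ?thesis
    using that by blast
qed

lemma homotopy_start_image_openin:
  assumes "smooth_manifold T A" "smooth_manifold T' B" "smooth_homotopy T A T' B f"
    and "submersion T A T' B (f 0)"
  shows "openin T' (f 0 ` topspace T)"
proof (rule openin_subopen[THEN iffD2], intro ballI)
  fix z assume "z \<in> f 0 ` topspace T"
  then obtain x where x: "x \<in> topspace T" "z = f 0 x"
    by blast
  obtain Y where Y: "openin T' Y" "f 0 x \<in> Y" "\<forall>\<^sub>F s in nhds 0. 0 \<le> s \<longrightarrow> Y \<subseteq> f s ` topspace T"
    using homotopy_covers_neighbourhood[OF assms x(1)] .
  have "Y \<subseteq> f 0 ` topspace T"
    using eventually_nhds_x_imp_x[OF Y(3)] by simp
  with Y(1,2) x(2) show "\<exists>Y. openin T' Y \<and> z \<in> Y \<and> Y \<subseteq> f 0 ` topspace T"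
    by blast
qed

lemma homotopy_image_locally_stable:
  assumes "smooth_manifold T A" "smooth_manifold T' B" "smooth_homotopy T A T' B f"
    and "submersion T A T' B (f 0)" "x \<in> topspace T"
  obtains N where "openin T N" "x \<in> N"
    "\<forall>\<^sub>F s in nhds 0. \<forall>y\<in>N. s \<in> {0..1} \<longrightarrow> f s y \<in> f 0 ` topspace T \<and> f 0 y \<in> f s ` topspace T"
proof -
  have homotopy: "continuous_map (prod_topology (top_of_set {0..1}) T) T' (\<lambda>(s, x). f s x)"
    using assms(3) by (simp add: smooth_homotopy_def)
  have image_open: "openin T' (f 0 ` topspace T)"
    using assms(1-4) by (rule homotopy_start_image_openin)
  have "(0::real) \<in> {0..1}" and image: "f 0 x \<in> f 0 ` topspace T"
    using assms(5) by auto
  then obtain N1 where N1: "openin T N1" "x \<in> N1"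
    "\<forall>\<^sub>F s in nhds 0. s \<in> {0..1} \<longrightarrow> (\<forall>y\<in>N1. f s y \<in> f 0 ` topspace T)"
    by (rule continuous_map_eventually_tube[OF homotopy image_open _ assms(5)])
  obtain Y where Y: "openin T' Y" "f 0 x \<in> Y" "\<forall>\<^sub>F s in nhds 0. 0 \<le> s \<longrightarrow> Y \<subseteq> f s ` topspace T"
    using homotopy_covers_neighbourhood[OF assms] .
  have "continuous_map T T' (f 0)"
    using assms(4) by (simp add: submersion_def smooth_map_def)
  then have "openin T {y \<in> topspace T. f 0 y \<in> Y}"
    using Y(1) by (rule openin_continuous_map_preimage)
  moreover have "x \<in> N1 \<inter> {y \<in> topspace T. f 0 y \<in> Y}"
    using N1(2) Y(2) assms(5) by blast
  moreover have "\<forall>\<^sub>F s in nhds 0. \<forall>y\<in>N1 \<inter> {y \<in> topspace T. f 0 y \<in> Y}. s \<in> {0..1} \<longrightarrow>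
      f s y \<in> f 0 ` topspace T \<and> f 0 y \<in> f s ` topspace T"
    using eventually_conj[OF N1(3) Y(3)] by (rule eventually_mono) (unfold atLeastAtMost_iff, blast)
  ultimately show ?thesis
    using that N1(1) by blast
qed

lemma homotopy_image_stable_on_compact:
  assumes "smooth_manifold T A" "smooth_manifold T' B" "smooth_homotopy T A T' B f"
    and "submersion T A T' B (f 0)" "compactin T K"
  shows "\<forall>\<^sub>F s in nhds 0. \<forall>y\<in>K. s \<in> {0..1} \<longrightarrow>
    f s y \<in> f 0 ` topspace T \<and> f 0 y \<in> f s ` topspace T"
proof (rule compactin_eventually_uniform[OF assms(5)])
  fix x assume "x \<in> K"
  then have "x \<in> topspace T"
    using compactin_subset_topspace[OF assms(5)] by blast
  then obtain N where "openin T N" "x \<in> N" "\<forall>\<^sub>F s in nhds 0. \<forall>y\<in>N. s \<in> {0..1} \<longrightarrow>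
      f s y \<in> f 0 ` topspace T \<and> f 0 y \<in> f s ` topspace T"
    by (rule homotopy_image_locally_stable[OF assms(1-4)])
  then show "\<exists>N. openin T N \<and> x \<in> N \<and> (\<forall>\<^sub>F s in nhds 0. \<forall>y\<in>N. s \<in> {0..1} \<longrightarrow>
      f s y \<in> f 0 ` topspace T \<and> f 0 y \<in> f s ` topspace T)"
    by blast
qed

lemma image_eq_if_exchanged_on:
  assumes "\<And>y. y \<in> K \<Longrightarrow> g y \<in> h ` M \<and> h y \<in> g ` M" "\<And>y. y \<in> M - K \<Longrightarrow> g y = h y"
  shows "g ` M = h ` M"
proof -
  have "g y \<in> h ` M \<and> h y \<in> g ` M" if "y \<in> M" for y
  proof (cases "y \<in> K")
    case False
    then have "g y = h y"
      using assms(2) that by blast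
    then show ?thesis
      using that by (metis image_eqI)
  qed (use assms(1) in blast)
  then show ?thesis
    by blast
qed

theorem mainTheorem6:
  fixes T :: "'a topology" and A :: "('a set \<times> ('a \<Rightarrow> 'm::euclidean_space)) set"
    and T' :: "'b topology" and B :: "('b set \<times> ('b \<Rightarrow> 'n::euclidean_space)) set"
    and f :: "real \<Rightarrow> 'a \<Rightarrow> 'b" and K :: "'a set"
  assumes "smooth_manifold T A" and "smooth_manifold T' B"
    and "smooth_homotopy T A T' B f"
    and "\<forall>s \<in> {0..1}. submersion T A T' B (f s)"
    and "compactin T K"
    and "\<forall>s \<in> {0..1}. \<forall>x \<in> topspace T - K. f s x = f 0 x"
  shows "\<exists>\<epsilon>>0. \<epsilon> \<le> 1 \<and> (\<forall>s \<in> {0..\<epsilon>}. f s ` topspace T = f 0 ` topspace T)"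
proof -
  have "submersion T A T' B (f 0)"
    using assms(4) by simp
  with assms(1-3,5) have "\<forall>\<^sub>F s in nhds 0. \<forall>y\<in>K. s \<in> {0..1} \<longrightarrow>
      f s y \<in> f 0 ` topspace T \<and> f 0 y \<in> f s ` topspace T"
    using homotopy_image_stable_on_compact by blast
  then obtain e where "e > 0" and e: "\<And>s. dist s 0 < e \<Longrightarrow> \<forall>y\<in>K. s \<in> {0..1} \<longrightarrow>
      f s y \<in> f 0 ` topspace T \<and> f 0 y \<in> f s ` topspace T"
    unfolding eventually_nhds_metric by blast
  show ?thesis
  proof (intro exI conjI ballI)
    fix s assume "s \<in> {0..min (e / 2) 1}"
    then have s: "s \<in> {0..1}" "dist s 0 < e"
      using \<open>e > 0\<close> by auto
    show "f s ` topspace T = f 0 ` topspace T"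
    proof (rule image_eq_if_exchanged_on)
      fix y assume "y \<in> K"
      then show "f s y \<in> f 0 ` topspace T \<and> f 0 y \<in> f s ` topspace T"
        using e[OF s(2)] s(1) by blast
    next
      fix y assume "y \<in> topspace T - K"
      then show "f s y = f 0 y"
        using assms(6) s(1) by blast
    qed
  qed (use \<open>e > 0\<close> in auto)
qed

end
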